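(* Let $A\in\mathbb{R}^{m\times N}$, $\eta\ge 0$, let $x\in\mathbb{R}^N$ be nonzero and $k$-sparse, and let $y=Ax+\varepsilon$ with $\lVert\varepsilon\rVert_2\le\eta$. Let $1<q\le\infty$ and suppose $\rho_{q,3^{q/(q-1)}k}(A)>0$. Then any solution $\hat x$ of $$\min_{z\in\mathbb{R}^N\setminus\{0\}}\frac{\lVert z\rVert_1}{\lVert z\rVert_q}\quad\text{subject to}\quad \lVert y-Az\rVert_2\le\eta$$ obeys $$\lVert\hat x-x\rVert_q\le\frac{2\eta}{\rho_{q,3^{q/(q-1)}k}(A)},\qquad \lVert\hat x-x\rVert_1\le\frac{6k^{1-1/q}\eta}{\rho_{q,3^{q/(q-1)}k}(A)}.$$
   Context: For nonzero $z\in\mathbb{R}^N$ and $q\in(1,\infty)$, $s_q(z)=\left(\lVert z\rVert_1/\lVert z\rVert_q\right)^{q/(q-1)}$, and $s_\infty(z)=\lVert z\rVert_1/\lVert z\rVert_\infty$. For real $s\ge1$ and $q\in(1,\infty]$, the $q$-ratio constrained minimal singular value of $A$ is $\rho_{q,s}(A)=\min\{\lVert Az\rVert_2/\lVert z\rVert_q: z\ne0,\ s_q(z)\le s\}$. For $q=\infty$ interpret $q/(q-1)=1$ and $1-1/q=1$. A vector is $k$-sparse if it has at most $k$ nonzero entries. *)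

theory Defs
  imports "HOL-Analysis.Analysis" "HOL-Library.Extended_Real"
begin

text \<open>Exponent q ranges over (1, infinity], modelled as an extended real.\<close>

definition lq_norm :: "ereal \<Rightarrow> real ^ 'n \<Rightarrow> real" where
  "lq_norm q z = (if q = \<infinity> then Max (range (\<lambda>i. \<bar>z $ i\<bar>))
                  else (\<Sum>i\<in>UNIV. \<bar>z $ i\<bar> powr real_of_ereal q) powr (1 / real_of_ereal q))"

definition l1_norm :: "real ^ 'n \<Rightarrow> real" where
  "l1_norm z = (\<Sum>i\<in>UNIV. \<bar>z $ i\<bar>)"

definition sq_exp :: "ereal \<Rightarrow> real" where
  "sq_exp q = (if q = \<infinity> then 1 else real_of_ereal q / (real_of_ereal q - 1))"

definition one_minus_inv :: "ereal \<Rightarrow> real" where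
  "one_minus_inv q = (if q = \<infinity> then 1 else 1 - 1 / real_of_ereal q)"

definition s_q :: "ereal \<Rightarrow> real ^ 'n \<Rightarrow> real" where
  "s_q q z = (l1_norm z / lq_norm q z) powr sq_exp q"

definition rho :: "ereal \<Rightarrow> real \<Rightarrow> real ^ 'n ^ 'm \<Rightarrow> real" where
  "rho q s A = Inf {norm (A *v z) / lq_norm q z | z. z \<noteq> 0 \<and> s_q q z \<le> s}"

definition sparse :: "nat \<Rightarrow> real ^ 'n \<Rightarrow> bool" where
  "sparse k x \<longleftrightarrow> card {i. x $ i \<noteq> 0} \<le> k"

end

theory Submission
  imports Defs
begin

text \<open>Let \<open>h = xhat - x\<close> and let \<open>S\<close> be the support of \<open>x\<close>, so \<open>|S| \<le> k\<close>. Since \<open>x\<close> is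
  feasible, optimality of \<open>xhat\<close> gives \<open>|xhat|\<^sub>1 / |xhat|\<^sub>q \<le> |x|\<^sub>1 / |x|\<^sub>q \<le> k powr (1 - 1/q)\<close>
  (Hoelder on \<open>S\<close>); with Minkowski's inequality \<open>|xhat|\<^sub>q \<le> |x|\<^sub>q + |h|\<^sub>q\<close> this yields
  \<open>|xhat|\<^sub>1 \<le> |x|\<^sub>1 + k powr (1 - 1/q) |h|\<^sub>q\<close>. Splitting \<open>|x + h|\<^sub>1\<close> over \<open>S\<close> and its complement
  turns this into the cone condition \<open>|h|\<^sub>1 \<le> 3 k powr (1 - 1/q) |h|\<^sub>q\<close>, i.e.
  \<open>s\<^sub>q h \<le> 3 powr (q/(q-1)) k\<close>. Hence \<open>\<rho> |h|\<^sub>q \<le> |A h|\<^sub>2 \<le> 2 \<eta>\<close>, and the cone condition turns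
  this into the \<open>\<ell>\<^sub>1\<close> bound.\<close>

lemma convex_on_powr_nonneg:
  assumes "p \<ge> 1"
  shows "convex_on {0..} (\<lambda>x::real. x powr p)"
proof (rule convex_onI)
  fix t x y :: real
  assume t: "0 < t" "t < 1" and xy: "x \<in> {0..}" "y \<in> {0..}"
  have powr_le_self: "s powr p \<le> s" if "0 \<le> s" "s \<le> 1" for s :: real
    using that assms powr_mono'[of 1 p s] by (cases "s = 0") auto
  consider "x = 0" | "y = 0" | "x > 0" "y > 0" using xy by fastforce
  then show "((1 - t) *\<^sub>R x + t *\<^sub>R y) powr p \<le> (1 - t) * x powr p + t * y powr p"
  proof cases
    case 1
    then show ?thesis
      using t xy powr_le_self[of t] by (simp add: powr_mult mult_right_mono)
  next
    case 2
    then show ?thesis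
      using t xy powr_le_self[of "1 - t"] by (simp add: powr_mult mult_right_mono)
  next
    case 3
    then show ?thesis using convex_onD[OF powr_convex[OF assms], of t x y] t by simp
  qed
qed simp

lemma convex_on_abs_powr:
  assumes "p \<ge> 1"
  shows "convex_on UNIV (\<lambda>x::real. \<bar>x\<bar> powr p)"
proof (rule convex_onI)
  fix t x y :: real
  assume t: "0 < t" "t < 1"
  have "\<bar>(1 - t) *\<^sub>R x + t *\<^sub>R y\<bar> powr p \<le> ((1 - t) *\<^sub>R \<bar>x\<bar> + t *\<^sub>R \<bar>y\<bar>) powr p"
    using t assms abs_triangle_ineq[of "(1 - t) * x" "t * y"]
    by (intro powr_mono2) (auto simp: abs_mult)
  also have "\<dots> \<le> (1 - t) * \<bar>x\<bar> powr p + t * \<bar>y\<bar> powr p"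
    using t by (intro convex_onD[OF convex_on_powr_nonneg[OF assms]]) auto
  finally show "\<bar>(1 - t) *\<^sub>R x + t *\<^sub>R y\<bar> powr p \<le> (1 - t) * \<bar>x\<bar> powr p + t * \<bar>y\<bar> powr p" .
qed simp

lemma convex_on_sum_abs_powr:
  assumes "p \<ge> 1"
  shows "convex_on UNIV (\<lambda>z::real ^ 'n. \<Sum>i\<in>UNIV. \<bar>z $ i\<bar> powr p)"
proof (rule convex_onI)
  fix t :: real and u v :: "real ^ 'n"
  assume t: "0 < t" "t < 1"
  have "(\<Sum>i\<in>UNIV. \<bar>((1 - t) *\<^sub>R u + t *\<^sub>R v) $ i\<bar> powr p)
      \<le> (\<Sum>i\<in>UNIV. (1 - t) * \<bar>u $ i\<bar> powr p + t * \<bar>v $ i\<bar> powr p)"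
    using t convex_onD[OF convex_on_abs_powr[OF assms], of t] by (intro sum_mono) simp
  then show "(\<Sum>i\<in>UNIV. \<bar>((1 - t) *\<^sub>R u + t *\<^sub>R v) $ i\<bar> powr p)
      \<le> (1 - t) * (\<Sum>i\<in>UNIV. \<bar>u $ i\<bar> powr p) + t * (\<Sum>i\<in>UNIV. \<bar>v $ i\<bar> powr p)"
    by (simp add: sum.distrib sum_distrib_left)
qed simp

definition lp_norm :: "real \<Rightarrow> real ^ 'n \<Rightarrow> real" where
  "lp_norm p z = (\<Sum>i\<in>UNIV. \<bar>z $ i\<bar> powr p) powr (1 / p)"

lemma lp_norm_nonneg: "lp_norm p z \<ge> 0"
  by (simp add: lp_norm_def)

lemma lp_norm_eq_0_iff: "lp_norm p z = 0 \<longleftrightarrow> z = 0"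
  by (simp add: lp_norm_def sum_nonneg_eq_0_iff vec_eq_iff)

lemma lp_norm_powr: "p > 0 \<Longrightarrow> lp_norm p z powr p = (\<Sum>i\<in>UNIV. \<bar>z $ i\<bar> powr p)"
  by (simp add: lp_norm_def powr_powr sum_nonneg)

lemma lp_norm_scaleR: "p > 0 \<Longrightarrow> lp_norm p (c *\<^sub>R z) = \<bar>c\<bar> * lp_norm p z"
  by (simp add: lp_norm_def abs_mult powr_mult sum_distrib_left[symmetric] sum_nonneg powr_powr)

lemma lp_norm_triangle:
  assumes p: "p \<ge> 1"
  shows "lp_norm p (u + v) \<le> lp_norm p u + lp_norm p v"
proof (cases "u = 0 \<or> v = 0")
  case False
  define a b where "a = lp_norm p u" and "b = lp_norm p v"
  have "a > 0" "b > 0"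
    using False lp_norm_nonneg lp_norm_eq_0_iff unfolding a_def b_def by (metis less_eq_real_def)+
  define t where "t = b / (a + b)"
  have t: "0 \<le> t" "t \<le> 1" using \<open>a > 0\<close> \<open>b > 0\<close> unfolding t_def by auto
  have convex_comb: "(1 / (a + b)) *\<^sub>R (u + v) = (1 - t) *\<^sub>R ((1 / a) *\<^sub>R u) + t *\<^sub>R ((1 / b) *\<^sub>R v)"
    using \<open>a > 0\<close> \<open>b > 0\<close> by (simp add: t_def field_simps scaleR_add_right)
  have unit: "(\<Sum>i\<in>UNIV. \<bar>((1 / c) *\<^sub>R w) $ i\<bar> powr p) = 1" if "c = lp_norm p w" "c > 0"
    for c and w :: "real ^ 'n"
    using that p lp_norm_powr[of p "(1 / c) *\<^sub>R w"] lp_norm_scaleR[of p "1 / c" w] by simp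
  have "lp_norm p ((1 / (a + b)) *\<^sub>R (u + v)) powr p
      = (\<Sum>i\<in>UNIV. \<bar>((1 - t) *\<^sub>R ((1 / a) *\<^sub>R u) + t *\<^sub>R ((1 / b) *\<^sub>R v)) $ i\<bar> powr p)"
    using p by (simp only: lp_norm_powr convex_comb)
  also have "\<dots> \<le> (1 - t) * 1 + t * 1"
    using convex_onD[OF convex_on_sum_abs_powr[OF p], of t "(1 / a) *\<^sub>R u" "(1 / b) *\<^sub>R v"] t
      unit[OF a_def \<open>a > 0\<close>] unit[OF b_def \<open>b > 0\<close>]
    by simp
  finally have "lp_norm p ((1 / (a + b)) *\<^sub>R (u + v)) powr p \<le> 1" by simp
  then have "(lp_norm p ((1 / (a + b)) *\<^sub>R (u + v)) powr p) powr (1 / p) \<le> 1"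
    using p by (intro powr_le1) auto
  then have "lp_norm p ((1 / (a + b)) *\<^sub>R (u + v)) \<le> 1"
    using p by (simp add: powr_powr lp_norm_nonneg)
  moreover have "lp_norm p ((1 / (a + b)) *\<^sub>R (u + v)) = lp_norm p (u + v) / (a + b)"
    using \<open>a > 0\<close> \<open>b > 0\<close> p lp_norm_scaleR[of p "1 / (a + b)" "u + v"] by simp
  ultimately show ?thesis
    using \<open>a > 0\<close> \<open>b > 0\<close> by (simp add: a_def b_def)
qed (auto simp: lp_norm_nonneg)

lemma sum_abs_le_card_powr_lp_norm:
  assumes p: "p \<ge> 1"
  shows "(\<Sum>i\<in>S. \<bar>z $ i\<bar>) \<le> real (card S) powr (1 - 1 / p) * lp_norm p z"
proof (cases "S = {}")
  case False
  define n where "n = real (card S)"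
  have n: "n > 0" using False unfolding n_def by (simp add: card_gt_0_iff)
  define a g where "a = (\<Sum>i\<in>S. \<bar>z $ i\<bar>)" and "g = (\<Sum>i\<in>S. \<bar>z $ i\<bar> powr p)"
  have "a \<ge> 0" "g \<ge> 0" unfolding a_def g_def by (auto intro: sum_nonneg)
  have "(\<Sum>i\<in>S. (1 / n) *\<^sub>R \<bar>z $ i\<bar>) powr p \<le> (\<Sum>i\<in>S. (1 / n) * \<bar>z $ i\<bar> powr p)"
    using n False by (intro convex_on_sum[OF _ _ convex_on_powr_nonneg[OF p]]) (auto simp: n_def)
  then have "(a / n) powr p \<le> g / n"
    by (simp add: a_def g_def sum_divide_distrib)
  then have "a / n \<le> (g / n) powr (1 / p)"
    using powr_mono2[of "1 / p" "(a / n) powr p" "g / n"] p n \<open>a \<ge> 0\<close> by (simp add: powr_powr)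
  then have "a \<le> n powr (1 - 1 / p) * g powr (1 / p)"
    using n \<open>g \<ge> 0\<close> by (simp add: powr_divide powr_diff field_simps)
  also have "g powr (1 / p) \<le> lp_norm p z"
    unfolding lp_norm_def g_def using p by (intro powr_mono2 sum_mono2 sum_nonneg) auto
  finally show ?thesis
    using n by (simp add: a_def n_def mult_left_mono)
qed (simp add: lp_norm_nonneg)

definition linf_norm :: "real ^ 'n \<Rightarrow> real" where
  "linf_norm z = Max (range (\<lambda>i. \<bar>z $ i\<bar>))"

lemma abs_le_linf_norm: "\<bar>z $ i\<bar> \<le> linf_norm z"
  unfolding linf_norm_def by (rule Max_ge) auto

lemma linf_norm_attained: "\<exists>i. linf_norm z = \<bar>z $ i\<bar>"
proof -
  have "linf_norm z \<in> range (\<lambda>i. \<bar>z $ i\<bar>)" unfolding linf_norm_def by (rule Max_in) auto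
  then show ?thesis by auto
qed

lemma linf_norm_nonneg: "linf_norm z \<ge> 0"
  using abs_le_linf_norm[of z] abs_ge_zero order_trans by blast

lemma linf_norm_eq_0_iff: "linf_norm z = 0 \<longleftrightarrow> z = 0"
  using abs_le_linf_norm[of z] linf_norm_attained[of z] by (auto simp: vec_eq_iff)

lemma linf_norm_triangle: "linf_norm (u + v) \<le> linf_norm u + linf_norm v"
proof -
  obtain i where "linf_norm (u + v) = \<bar>u $ i + v $ i\<bar>"
    using linf_norm_attained[of "u + v"] by auto
  also have "\<dots> \<le> \<bar>u $ i\<bar> + \<bar>v $ i\<bar>" by (rule abs_triangle_ineq)
  also have "\<dots> \<le> linf_norm u + linf_norm v" by (intro add_mono abs_le_linf_norm)
  finally show ?thesis .
qed

lemma sum_abs_le_card_linf_norm: "(\<Sum>i\<in>S. \<bar>z $ i\<bar>) \<le> real (card S) * linf_norm z"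
  using sum_bounded_above[of S "\<lambda>i. \<bar>z $ i\<bar>" "linf_norm z"] abs_le_linf_norm by auto

lemma lq_norm_finite: "q \<noteq> \<infinity> \<Longrightarrow> lq_norm q z = lp_norm (real_of_ereal q) z"
  by (simp add: lq_norm_def lp_norm_def)

lemma lq_norm_infinity: "lq_norm \<infinity> z = linf_norm z"
  by (simp add: lq_norm_def linf_norm_def)

lemma lq_norm_nonneg: "lq_norm q z \<ge> 0"
  by (cases "q = \<infinity>") (auto simp: lq_norm_finite lq_norm_infinity lp_norm_nonneg linf_norm_nonneg)

lemma lq_norm_eq_0_iff: "lq_norm q z = 0 \<longleftrightarrow> z = 0"
  by (cases "q = \<infinity>") (auto simp: lq_norm_finite lq_norm_infinity lp_norm_eq_0_iff linf_norm_eq_0_iff)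

lemma lq_norm_zero [simp]: "lq_norm q 0 = 0"
  by (simp add: lq_norm_eq_0_iff)

lemma lq_norm_triangle: "1 < q \<Longrightarrow> lq_norm q (u + v) \<le> lq_norm q u + lq_norm q v"
  by (cases q) (auto simp: lq_norm_finite lq_norm_infinity linf_norm_triangle intro!: lp_norm_triangle)

lemma sum_abs_le_card_powr_lq_norm:
  "1 < q \<Longrightarrow> (\<Sum>i\<in>S. \<bar>z $ i\<bar>) \<le> real (card S) powr one_minus_inv q * lq_norm q z"
  by (cases q)
    (auto simp: lq_norm_finite lq_norm_infinity one_minus_inv_def sum_abs_le_card_linf_norm
      intro!: sum_abs_le_card_powr_lp_norm)

lemma one_minus_inv_pos: "1 < q \<Longrightarrow> one_minus_inv q > 0"
  by (cases q) (auto simp: one_minus_inv_def)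

lemma sq_exp_pos: "1 < q \<Longrightarrow> sq_exp q > 0"
  by (cases q) (auto simp: sq_exp_def)

lemma one_minus_inv_mult_sq_exp: "1 < q \<Longrightarrow> one_minus_inv q * sq_exp q = 1"
  by (cases q) (auto simp: one_minus_inv_def sq_exp_def field_simps)

lemma le_add_of_ratio_le:
  fixes a b m n c d :: real
  assumes "0 < m" "0 < n" "a / m \<le> b / n" "0 \<le> b" "b \<le> c * n" "m \<le> n + d" "0 \<le> d"
  shows "a \<le> b + c * d"
proof -
  have "a \<le> b / n * m" using assms(1,3) by (simp add: pos_divide_le_eq)
  also have "\<dots> = b + b / n * (m - n)" using assms(2) by (simp add: field_simps)
  also have "\<dots> \<le> b + b / n * d" using assms(2,4,6) by (intro add_left_mono mult_left_mono) auto
  also have "\<dots> \<le> b + c * d" using assms(2,5,7) by (intro add_left_mono mult_right_mono) (auto simp: field_simps)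
  finally show ?thesis .
qed

lemma l1_norm_nonneg: "l1_norm z \<ge> 0"
  by (simp add: l1_norm_def sum_nonneg)

lemma l1_norm_split: "l1_norm z = (\<Sum>i\<in>S. \<bar>z $ i\<bar>) + (\<Sum>i\<in>-S. \<bar>z $ i\<bar>)"
  unfolding l1_norm_def using sum.subset_diff[of S UNIV] by (simp add: Compl_eq_Diff_UNIV add.commute)

lemma l1_norm_add_ge:
  assumes "{i. x $ i \<noteq> 0} \<subseteq> S"
  shows "l1_norm x - (\<Sum>i\<in>S. \<bar>h $ i\<bar>) + (\<Sum>i\<in>-S. \<bar>h $ i\<bar>) \<le> l1_norm (x + h)"
proof -
  have outside: "x $ i = 0" if "i \<in> -S" for i
    using assms that by blast
  have "l1_norm x - (\<Sum>i\<in>S. \<bar>h $ i\<bar>) = (\<Sum>i\<in>S. \<bar>x $ i\<bar> - \<bar>h $ i\<bar>)"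
    using l1_norm_split[of x S] by (simp add: outside sum_subtractf)
  also have "\<dots> \<le> (\<Sum>i\<in>S. \<bar>(x + h) $ i\<bar>)"
    by (intro sum_mono) (simp add: abs_triangle_ineq4[of "x $ i" "- h $ i" for i, simplified])
  finally have "l1_norm x - (\<Sum>i\<in>S. \<bar>h $ i\<bar>) \<le> (\<Sum>i\<in>S. \<bar>(x + h) $ i\<bar>)" .
  moreover have "(\<Sum>i\<in>-S. \<bar>h $ i\<bar>) = (\<Sum>i\<in>-S. \<bar>(x + h) $ i\<bar>)"
    by (simp add: outside)
  ultimately show ?thesis
    using l1_norm_split[of "x + h" S] by linarith
qed

lemma l1_norm_diff_le_of_ratio_le:
  fixes x x' :: "real ^ 'n"
  assumes q: "1 < q" and "sparse k x" "x \<noteq> 0" "x' \<noteq> 0"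
    and ratio: "l1_norm x' / lq_norm q x' \<le> l1_norm x / lq_norm q x"
  shows "l1_norm (x' - x) \<le> 3 * real k powr one_minus_inv q * lq_norm q (x' - x)"
proof -
  define S where "S = {i. x $ i \<noteq> 0}"
  define c where "c = real k powr one_minus_inv q"
  define h where "h = x' - x"
  have "c \<ge> 0" by (simp add: c_def)
  have on_S: "(\<Sum>i\<in>S. \<bar>z $ i\<bar>) \<le> c * lq_norm q z" for z :: "real ^ 'n"
  proof -
    have "real (card S) powr one_minus_inv q \<le> c"
      using \<open>sparse k x\<close> one_minus_inv_pos[OF q]
      by (auto simp: c_def S_def sparse_def intro!: powr_mono2)
    then show ?thesis
      using sum_abs_le_card_powr_lq_norm[OF q, where S = S and z = z] lq_norm_nonneg[of q z]
      by (meson mult_right_mono order_trans)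
  qed
  have "l1_norm x = (\<Sum>i\<in>S. \<bar>x $ i\<bar>)"
    using l1_norm_split[of x S] by (simp add: S_def)
  then have l1_x: "l1_norm x \<le> c * lq_norm q x"
    using on_S by simp
  have "lq_norm q x > 0" "lq_norm q x' > 0"
    using \<open>x \<noteq> 0\<close> \<open>x' \<noteq> 0\<close> lq_norm_nonneg lq_norm_eq_0_iff by (metis less_eq_real_def)+
  moreover have "lq_norm q x' \<le> lq_norm q x + lq_norm q h"
    using lq_norm_triangle[OF q, of x h] by (simp add: h_def)
  ultimately have "l1_norm x' \<le> l1_norm x + c * lq_norm q h"
    using le_add_of_ratio_le ratio l1_norm_nonneg l1_x lq_norm_nonneg by blast
  moreover have "l1_norm x - (\<Sum>i\<in>S. \<bar>h $ i\<bar>) + (\<Sum>i\<in>-S. \<bar>h $ i\<bar>) \<le> l1_norm x'"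
    using l1_norm_add_ge[of x S h] by (simp add: S_def h_def)
  ultimately have "l1_norm h \<le> 2 * (\<Sum>i\<in>S. \<bar>h $ i\<bar>) + c * lq_norm q h"
    using l1_norm_split[of h S] by linarith
  then show ?thesis
    using on_S[of h] by (simp add: c_def h_def)
qed

lemma s_q_le_of_l1_norm_le:
  assumes q: "1 < q" and "0 \<le> t"
    and l1: "l1_norm z \<le> t * real k powr one_minus_inv q * lq_norm q z"
  shows "s_q q z \<le> t powr sq_exp q * real k"
proof -
  have "l1_norm z / lq_norm q z \<le> t * real k powr one_minus_inv q"
    using l1 lq_norm_nonneg[of q z] \<open>0 \<le> t\<close> by (cases "lq_norm q z = 0") (auto simp: pos_divide_le_eq)
  then have "s_q q z \<le> (t * real k powr one_minus_inv q) powr sq_exp q"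
    unfolding s_q_def using sq_exp_pos[OF q]
    by (intro powr_mono2) (auto simp: l1_norm_nonneg lq_norm_nonneg)
  also have "\<dots> = t powr sq_exp q * real k"
    using \<open>0 \<le> t\<close> one_minus_inv_mult_sq_exp[OF q] by (simp add: powr_mult powr_powr)
  finally show ?thesis .
qed

lemma rho_mult_le:
  assumes "s_q q z \<le> s"
  shows "rho q s A * lq_norm q z \<le> norm (A *v z)"
proof (cases "z = 0")
  case False
  then have "lq_norm q z > 0"
    using lq_norm_nonneg lq_norm_eq_0_iff by (metis less_eq_real_def)
  have "rho q s A \<le> norm (A *v z) / lq_norm q z"
    unfolding rho_def
  proof (rule cInf_lower)
    show "norm (A *v z) / lq_norm q z \<in> {norm (A *v z) / lq_norm q z |z. z \<noteq> 0 \<and> s_q q z \<le> s}"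
      using False assms by blast
    show "bdd_below {norm (A *v z) / lq_norm q z |z. z \<noteq> 0 \<and> s_q q z \<le> s}"
      by (rule bdd_belowI[of _ 0]) (auto simp: lq_norm_nonneg)
  qed
  then show ?thesis
    using \<open>lq_norm q z > 0\<close> by (simp add: pos_le_divide_eq)
qed simp

lemma norm_matrix_vector_mult_diff_le:
  fixes A :: "real ^ 'n ^ 'm"
  shows "norm (A *v (u - v)) \<le> norm (y - A *v u) + norm (y - A *v v)"
proof -
  have "A *v (u - v) = (y - A *v v) - (y - A *v u)"
    by (simp add: matrix_vector_mult_diff_distrib)
  then show ?thesis
    by (metis add.commute norm_triangle_ineq4)
qed

theorem theorem1:
  fixes A :: "real ^ 'n ^ 'm" and x xhat :: "real ^ 'n" and y \<epsilon> :: "real ^ 'm"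
    and \<eta> :: real and k :: nat and q :: ereal
  assumes "\<eta> \<ge> 0"
    and "x \<noteq> 0" and "sparse k x"
    and "y = A *v x + \<epsilon>" and "norm \<epsilon> \<le> \<eta>"
    and "1 < q"
    and "rho q (3 powr sq_exp q * real k) A > 0"
    and "xhat \<noteq> 0" and "norm (y - A *v xhat) \<le> \<eta>"
    and "\<forall>z. z \<noteq> 0 \<and> norm (y - A *v z) \<le> \<eta> \<longrightarrow>
           l1_norm xhat / lq_norm q xhat \<le> l1_norm z / lq_norm q z"
  shows "lq_norm q (xhat - x) \<le> 2 * \<eta> / rho q (3 powr sq_exp q * real k) A
    \<and> l1_norm (xhat - x) \<le> 6 * real k powr one_minus_inv q * \<eta> / rho q (3 powr sq_exp q * real k) A"
proof -
  define r where "r = rho q (3 powr sq_exp q * real k) A"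
  define h where "h = xhat - x"
  have "norm (y - A *v x) \<le> \<eta>"
    using assms(4,5) by simp
  then have "l1_norm xhat / lq_norm q xhat \<le> l1_norm x / lq_norm q x"
    using assms(2,10) by blast
  then have cone: "l1_norm h \<le> 3 * real k powr one_minus_inv q * lq_norm q h"
    using l1_norm_diff_le_of_ratio_le[OF \<open>1 < q\<close> \<open>sparse k x\<close> \<open>x \<noteq> 0\<close> \<open>xhat \<noteq> 0\<close>]
    by (simp add: h_def)
  have "r * lq_norm q h \<le> norm (A *v h)"
    using s_q_le_of_l1_norm_le[OF \<open>1 < q\<close> _ cone] by (simp add: r_def rho_mult_le)
  also have "\<dots> \<le> 2 * \<eta>"
    using norm_matrix_vector_mult_diff_le[of A xhat x y] \<open>norm (y - A *v x) \<le> \<eta>\<close> assms(9)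
    by (simp add: h_def)
  finally have tube: "lq_norm q h \<le> 2 * \<eta> / r"
    using assms(7) by (simp add: r_def pos_le_divide_eq mult.commute)
  have "l1_norm h \<le> 3 * real k powr one_minus_inv q * (2 * \<eta> / r)"
    using cone mult_left_mono[OF tube, of "3 * real k powr one_minus_inv q"] by simp
  then show ?thesis
    using tube by (simp add: h_def r_def)
qed

end
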